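(* Let $\rho:\mathbb{R}^3\to\mathbb{R}_{\ge 0}$ be a differentiable probability density supported in the closed unit ball of $\mathbb{R}^3$, and let $B=\sup_{\mathbf{x}}|\nabla\rho(\mathbf{x})|$. Let $I_1,I_2$ be the tomographic projections of $\rho$ along unit vectors $\mathbf{u}$ and $\mathbf{v}$ respectively, and let $\measuredangle(\mathbf{u},\mathbf{v})\in[0,\pi]$ be the angle between them. Then $$L_2^R(I_1,I_2)\le 2\sqrt{\pi}\,B\,\measuredangle(\mathbf{u},\mathbf{v}).$$
   Context: For $R\in\mathrm{SO}(3)$ define $(R\rho)(\mathbf{x})=\rho(R^T\mathbf{x})$. The tomographic projection of $\rho$ along a unit vector $\mathbf{u}$ is the function on $\mathbb{R}^2$ given by $I(x,y)=\int_{\mathbb{R}}(R\rho)(x,y,z)\,dz$, where $R\in\mathrm{SO}(3)$ is any rotation with $R\mathbf{u}=(0,0,-1)$; different choices of $R$ change $I$ only by an in-plane rotation. For $g\in\mathrm{SO}(2)$ and a function $I$ on $\mathbb{R}^2$ let $(gI)(\mathbf{w})=I(g^T\mathbf{w})$. The rotationally-invariant Euclidean distance is $L_2^R(I_1,I_2)=\min_{g\in\mathrm{SO}(2)}\|I_1-gI_2\|_{L^2(\mathbb{R}^2)}$. *)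

theory Defs
  imports "HOL-Analysis.Analysis"
begin

definition grad :: "(real^3 \<Rightarrow> real) \<Rightarrow> real^3 \<Rightarrow> real^3" where
  "grad f x = (\<chi> i. frechet_derivative f (at x) (axis i 1))"

definition rot3 :: "real^3^3 \<Rightarrow> (real^3 \<Rightarrow> real) \<Rightarrow> real^3 \<Rightarrow> real" where
  "rot3 R \<rho> x = \<rho> (transpose R *v x)"

definition rot2 :: "real^2^2 \<Rightarrow> (real^2 \<Rightarrow> real) \<Rightarrow> real^2 \<Rightarrow> real" where
  "rot2 g I w = I (transpose g *v w)"

definition proj :: "real^3^3 \<Rightarrow> (real^3 \<Rightarrow> real) \<Rightarrow> real^2 \<Rightarrow> real" where
  "proj R \<rho> w = (LINT z|lborel. rot3 R \<rho> (vector [w$1, w$2, z]))"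

definition is_tomo_proj :: "(real^3 \<Rightarrow> real) \<Rightarrow> real^3 \<Rightarrow> (real^2 \<Rightarrow> real) \<Rightarrow> bool" where
  "is_tomo_proj \<rho> u I \<longleftrightarrow>
     (\<exists>R. rotation_matrix R \<and> R *v u = vector [0, 0, -1] \<and> I = proj R \<rho>)"

definition L2norm2 :: "(real^2 \<Rightarrow> real) \<Rightarrow> real" where
  "L2norm2 f = sqrt (LINT w|lborel. (f w)\<^sup>2)"

definition L2R :: "(real^2 \<Rightarrow> real) \<Rightarrow> (real^2 \<Rightarrow> real) \<Rightarrow> real" where
  "L2R I1 I2 = (INF g\<in>{g. rotation_matrix g}. L2norm2 (\<lambda>w. I1 w - rot2 g I2 w))"

definition vangle :: "real^3 \<Rightarrow> real^3 \<Rightarrow> real" where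
  "vangle u v = arccos (u \<bullet> v)"

end

theory Submission
  imports Defs
begin

text \<open>Let \<theta> be the angle between u and v and p the unit bisector of u and v. The product Q of the
half-turns about p and about v is the rotation by \<theta> about p \<times> v: it takes u to v and moves every x
by at most 2 sin(\<theta>/2) |x| \<le> \<theta> |x|. If R1 computes I1, then R1 Q^T sends v to (0,0,-1), so the
projection it computes is an in-plane rotation g I2 of I2. Hence (I1 - g I2)(w) is an integral of
\<rho>(x) - \<rho>(Q x) along a line; as \<rho> is B-Lipschitz and vanishes outside the unit ball, the integrand
is at most B \<theta> on a segment of length 2 and zero elsewhere, and it vanishes identically if |w| > 1.
So |I1 - g I2| \<le> 2 B \<theta> on the unit disc and 0 outside, whose L2 norm is at most 2 sqrt(pi) B \<theta>.\<close>

unbundle cross3_syntax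

section \<open>A gradient bound is a Lipschitz constant\<close>

lemma linear_eq_inner_axis:
  fixes D :: "real^'n \<Rightarrow> real"
  assumes "linear D"
  shows "D h = h \<bullet> (\<chi> i. D (axis i 1))"
proof -
  have "D h = D (\<Sum>i\<in>UNIV. h$i *\<^sub>R axis i 1)"
    using basis_expansion[of h] by (simp add: scalar_mult_eq_scaleR)
  also have "\<dots> = (\<Sum>i\<in>UNIV. h$i * D (axis i 1))"
    using assms by (simp add: linear_sum linear_scale)
  also have "\<dots> = h \<bullet> (\<chi> i. D (axis i 1))"
    by (simp add: inner_vec_def)
  finally show ?thesis .
qed

lemma lipschitz_on_SUP_norm_grad:
  fixes f :: "real^3 \<Rightarrow> real"
  assumes diff: "\<And>x. f differentiable (at x)"
    and bdd: "bdd_above (range (\<lambda>x. norm (grad f x)))"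
  shows "(SUP x. norm (grad f x))-lipschitz_on UNIV f"
proof (rule lipschitz_onI)
  let ?B = "SUP x. norm (grad f x)"
  show "0 \<le> ?B"
    by (rule order_trans[OF norm_ge_zero cSUP_upper[OF UNIV_I bdd]])
  fix x y :: "real^3"
  have "norm (f x - f y) \<le> ?B * norm (x - y)"
  proof (rule differentiable_bound[where S=UNIV and f'="\<lambda>x. frechet_derivative f (at x)"])
    fix z :: "real^3"
    show "(f has_derivative frechet_derivative f (at z)) (at z within UNIV)"
      using diff frechet_derivative_works by auto
    have lin: "linear (frechet_derivative f (at z))"
      using diff linear_frechet_derivative by blast
    show "onorm (frechet_derivative f (at z)) \<le> ?B"
    proof (rule onorm_le)
      fix h
      have "norm (frechet_derivative f (at z) h) = \<bar>h \<bullet> grad f z\<bar>"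
        using linear_eq_inner_axis[OF lin, of h] by (simp add: grad_def)
      also have "\<dots> \<le> norm h * norm (grad f z)"
        by (rule Cauchy_Schwarz_ineq2)
      also have "\<dots> \<le> ?B * norm h"
        using cSUP_upper[OF _ bdd, of z] by (simp add: mult.commute mult_left_mono)
      finally show "norm (frechet_derivative f (at z) h) \<le> ?B * norm h" .
    qed
  qed auto
  then show "dist (f x) (f y) \<le> ?B * dist x y"
    by (simp add: dist_norm)
qed

section \<open>A rotation by the angle between two unit vectors\<close>

lemma norm_orthogonal_matrix_vector:
  "orthogonal_matrix (A::real^'n^'n) \<Longrightarrow> norm (A *v x) = norm x"
  by (metis orthogonal_transformation_matrix orthogonal_transformation_norm
      matrix_of_matrix_vector_mul matrix_vector_mul_linear)

lemma orthogonal_matrix_transpose_mult_vector: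
  "orthogonal_matrix (A::real^'n^'n) \<Longrightarrow> transpose A *v (A *v x) = x"
  by (simp add: matrix_vector_mul_assoc orthogonal_matrix)

lemma rotation_matrix_mul:
  "rotation_matrix A \<Longrightarrow> rotation_matrix B \<Longrightarrow> rotation_matrix (A ** (B::real^'n^'n))"
  by (simp add: rotation_matrix_def orthogonal_matrix_mul det_mul)

lemma rotation_matrix_transpose:
  "rotation_matrix A \<Longrightarrow> rotation_matrix (transpose (A::real^'n^'n))"
  by (simp add: rotation_matrix_def)

definition half_turn :: "real^3 \<Rightarrow> real^3^3" where
  "half_turn p = (\<chi> i j. 2 * p$i * p$j - (if i = j then 1 else 0))"

lemma half_turn_apply: "half_turn p *v x = (2 * (p \<bullet> x)) *\<^sub>R p - x"
  by (simp add: half_turn_def vec_eq_iff matrix_vector_mult_def inner_vec_def sum_3 forall_3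
      algebra_simps)

lemma transpose_half_turn: "transpose (half_turn p) = half_turn p"
  by (simp add: half_turn_def vec_eq_iff transpose_def mult.commute)

lemma half_turn_mult_self:
  assumes "norm p = 1"
  shows "half_turn p ** half_turn p = mat 1"
  unfolding matrix_eq
proof
  fix x
  have "p \<bullet> ((2 * (p \<bullet> x)) *\<^sub>R p - x) = p \<bullet> x"
    using assms by (simp add: inner_diff_right norm_eq_1)
  then show "(half_turn p ** half_turn p) *v x = mat 1 *v x"
    by (simp add: matrix_vector_mul_assoc[symmetric] half_turn_apply)
qed

lemma rotation_matrix_half_turn:
  assumes "norm p = 1"
  shows "rotation_matrix (half_turn p)"
proof -
  have "p$1 * p$1 + p$2 * p$2 + p$3 * p$3 = 1"
    using assms by (simp add: norm_eq_1 inner_vec_def sum_3)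
  moreover have "det (half_turn p) = 2 * (p$1 * p$1 + p$2 * p$2 + p$3 * p$3) - 1"
    by (simp add: half_turn_def det_3 algebra_simps)
  moreover have "orthogonal_matrix (half_turn p)"
    using half_turn_mult_self[OF assms] by (simp add: orthogonal_matrix transpose_half_turn)
  ultimately show ?thesis
    by (simp add: rotation_matrix_def)
qed

lemma gram_det_eq_triple_product_sq:
  fixes p v x :: "real^3"
  shows "(p\<bullet>p) * (v\<bullet>v) * (x\<bullet>x) + 2 * (p\<bullet>x) * (v\<bullet>x) * (p\<bullet>v)
           - (p\<bullet>p) * (v\<bullet>x)^2 - (v\<bullet>v) * (p\<bullet>x)^2 - (x\<bullet>x) * (p\<bullet>v)^2
         = (p \<bullet> (v \<times> x))^2"
  unfolding cross3_def inner_vec_def sum_3 inner_real_def by (simp add: vector_def) algebra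

lemma norm_diff_components_le:
  fixes p v x :: "real^3"
  assumes p: "norm p = 1" and v: "norm v = 1"
  shows "norm ((p\<bullet>x) *\<^sub>R p - (v\<bullet>x) *\<^sub>R v) \<le> sqrt (1 - (p\<bullet>v)^2) * norm x"
proof -
  have pp: "p\<bullet>p = 1" and vv: "v\<bullet>v = 1"
    using p v by (auto simp: norm_eq_1)
  have "(p\<bullet>v)^2 \<le> 1"
    using Cauchy_Schwarz_ineq2[of p v] p v by (simp add: abs_square_le_1)
  have "(norm ((p\<bullet>x) *\<^sub>R p - (v\<bullet>x) *\<^sub>R v))^2 = (p\<bullet>x)^2 + (v\<bullet>x)^2 - 2*(p\<bullet>x)*(v\<bullet>x)*(p\<bullet>v)"
    unfolding power2_norm_eq_inner
    by (simp add: pp vv inner_diff_left inner_diff_right inner_commute power2_eq_square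
        algebra_simps)
  also have "\<dots> \<le> (1 - (p\<bullet>v)^2) * (norm x)^2"
    using gram_det_eq_triple_product_sq[of p v x] zero_le_power2[of "p \<bullet> (v \<times> x)"]
    by (simp add: pp vv power2_norm_eq_inner algebra_simps)
  also have "\<dots> = (sqrt (1 - (p\<bullet>v)^2) * norm x)^2"
    using \<open>(p\<bullet>v)^2 \<le> 1\<close> by (simp add: power_mult_distrib)
  finally show ?thesis
    by (rule power2_le_imp_le) (use \<open>(p\<bullet>v)^2 \<le> 1\<close> in simp)
qed

lemma half_turns_displacement_le:
  fixes p v x :: "real^3"
  assumes p: "norm p = 1" and v: "norm v = 1"
  shows "norm (half_turn v *v (half_turn p *v x) - x) \<le> 2 * sqrt (1 - (p\<bullet>v)^2) * norm x"
proof -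
  have "half_turn v *v (half_turn p *v x) - x = half_turn v *v (half_turn p *v x - half_turn v *v x)"
    by (simp add: matrix_vector_mult_diff_distrib matrix_vector_mul_assoc half_turn_mult_self[OF v])
  then have "norm (half_turn v *v (half_turn p *v x) - x) = norm (half_turn p *v x - half_turn v *v x)"
    using rotation_matrix_half_turn[OF v]
    by (simp add: norm_orthogonal_matrix_vector rotation_matrix_def)
  also have "half_turn p *v x - half_turn v *v x = 2 *\<^sub>R ((p\<bullet>x) *\<^sub>R p - (v\<bullet>x) *\<^sub>R v)"
    by (simp add: half_turn_apply algebra_simps)
  finally show ?thesis
    using norm_diff_components_le[OF p v, of x] by simp
qed

lemma exists_unit_orthogonal:
  fixes v :: "real^3"
  obtains p where "norm p = 1" "p \<bullet> v = 0"
proof -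
  define q :: "real^3" where
    "q = (if v$1 = 0 \<and> v$2 = 0 then axis 1 1 else vector [-v$2, v$1, 0])"
  have "q \<noteq> 0"
    by (auto simp: q_def vec_eq_iff forall_3 axis_def)
  moreover have "q \<bullet> v = 0"
    by (auto simp: q_def inner_vec_def sum_3 axis_def)
  ultimately show ?thesis
    by (intro that[of "q /\<^sub>R norm q"]) simp_all
qed

lemma exists_unit_bisector:
  fixes u v :: "real^3"
  assumes u: "norm u = 1" and v: "norm v = 1"
  obtains p where "norm p = 1" "(2 * (p \<bullet> v)) *\<^sub>R p = u + v" "(p \<bullet> v)^2 = (1 + u \<bullet> v) / 2"
proof (cases "u + v = 0")
  case True
  then have "u \<bullet> v = -1"
    using v by (simp add: add_eq_0_iff norm_eq_1)
  moreover obtain p where "norm p = 1" "p \<bullet> v = 0"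
    using exists_unit_orthogonal by blast
  ultimately show ?thesis
    using True by (intro that[of p]) simp_all
next
  case False
  define s where "s = u + v"
  have ns: "(norm s)^2 = 2 * (1 + u \<bullet> v)"
    using u v by (simp add: s_def power2_norm_eq_inner inner_add_left inner_add_right
        inner_commute norm_eq_1)
  have sv: "s \<bullet> v = 1 + u \<bullet> v"
    using v by (simp add: s_def inner_add_left norm_eq_1)
  have s0: "norm s \<noteq> 0"
    using False by (simp add: s_def)
  define p where "p = s /\<^sub>R norm s"
  have pv: "p \<bullet> v = (1 + u \<bullet> v) / norm s"
    by (simp add: p_def sv divide_inverse mult.commute)
  show ?thesis
  proof (rule that[of p])
    show "norm p = 1"
      using s0 by (simp add: p_def)
    have "(2 * (p \<bullet> v)) *\<^sub>R p = (2 * (1 + u \<bullet> v) / (norm s)^2) *\<^sub>R s"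
      by (simp add: p_def sv power2_eq_square field_simps)
    also have "2 * (1 + u \<bullet> v) / (norm s)^2 = 1"
      using s0 by (simp only: ns[symmetric]) simp
    finally show "(2 * (p \<bullet> v)) *\<^sub>R p = u + v"
      by (simp add: s_def)
    have "(norm s)^2 > 0"
      using s0 by simp
    then have "1 + u \<bullet> v \<noteq> 0"
      using ns by simp
    then show "(p \<bullet> v)^2 = (1 + u \<bullet> v) / 2"
      by (simp add: pv power_divide ns field_simps power2_eq_square[of "1 + u \<bullet> v"])
  qed
qed

lemma half_angle_le_arccos:
  fixes c :: real
  assumes "-1 \<le> c" "c \<le> 1"
  shows "2 * sqrt ((1 - c) / 2) \<le> arccos c"
proof -
  let ?t = "arccos c"
  have "cos ?t = 1 - 2 * sin (?t/2) ^ 2"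
    using cos_double_sin[of "?t/2"] by simp
  then have "(1 - c) / 2 = sin (?t/2) ^ 2"
    using assms cos_arccos by simp
  then have "sqrt ((1 - c) / 2) = \<bar>sin (?t/2)\<bar>"
    by simp
  also have "\<dots> \<le> \<bar>?t/2\<bar>"
    by (rule abs_sin_x_le_abs_x)
  finally show ?thesis
    using assms arccos_lbound by simp
qed

lemma exists_rotation_displacement_le_vangle:
  fixes u v :: "real^3"
  assumes u: "norm u = 1" and v: "norm v = 1"
  obtains Q where "rotation_matrix Q" "Q *v u = v"
    "\<And>x. norm (Q *v x - x) \<le> vangle u v * norm x"
proof -
  obtain p where p: "norm p = 1" and puv: "(2 * (p \<bullet> v)) *\<^sub>R p = u + v"
    and pv: "(p \<bullet> v)^2 = (1 + u \<bullet> v) / 2"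
    using exists_unit_bisector[OF u v] by blast
  have "p \<bullet> ((2 * (p \<bullet> v)) *\<^sub>R p) = 2 * (p \<bullet> v)"
    using p by (simp add: norm_eq_1)
  then have "p \<bullet> u = p \<bullet> v"
    unfolding puv by (simp add: inner_add_right)
  then have pu: "half_turn p *v u = v"
    using puv by (simp add: half_turn_apply)
  have vv: "half_turn v *v v = v"
    using v by (simp add: half_turn_apply norm_eq_1 scaleR_2)
  have angle: "2 * sqrt (1 - (p \<bullet> v)^2) \<le> vangle u v"
  proof -
    have "1 - (p \<bullet> v)^2 = (1 - u \<bullet> v) / 2"
      by (simp add: pv field_simps)
    moreover have "2 * sqrt ((1 - u \<bullet> v) / 2) \<le> vangle u v"
      using half_angle_le_arccos[of "u \<bullet> v"] Cauchy_Schwarz_ineq2[of u v] u v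
      by (simp add: vangle_def abs_le_iff)
    ultimately show ?thesis
      by metis
  qed
  show ?thesis
  proof (rule that[of "half_turn v ** half_turn p"])
    show "rotation_matrix (half_turn v ** half_turn p)"
      by (simp add: rotation_matrix_mul rotation_matrix_half_turn p v)
    show "(half_turn v ** half_turn p) *v u = v"
      by (simp add: matrix_vector_mul_assoc[symmetric] pu vv)
    show "norm ((half_turn v ** half_turn p) *v x - x) \<le> vangle u v * norm x" for x
      using half_turns_displacement_le[OF p v, of x] mult_right_mono[OF angle norm_ge_zero, of x]
      by (simp add: matrix_vector_mul_assoc[symmetric])
  qed
qed

section \<open>Projections computed with different rotations\<close>

lemma rotation_fixing_e3_acts_in_plane:
  fixes S :: "real^3^3"
  assumes rS: "rotation_matrix S" and fix3: "S *v vector [0,0,1] = vector [0,0,1]"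
  obtains g :: "real^2^2" where "rotation_matrix g"
    "\<And>w z. transpose S *v vector [w$1, w$2, z] = vector [(transpose g *v w)$1, (transpose g *v w)$2, z]"
proof -
  have c3: "S$1$3 = 0" "S$2$3 = 0" "S$3$3 = 1"
    using fix3 by (auto simp: vec_eq_iff forall_3 matrix_vector_mult_def sum_3)
  have o1: "transpose S ** S = mat 1" and o2: "S ** transpose S = mat 1"
    using rS by (auto simp: rotation_matrix_def orthogonal_matrix_def)
  have e1: "S$1$1*S$1$1 + S$2$1*S$2$1 + S$3$1*S$3$1 = 1"
           "S$1$2*S$1$2 + S$2$2*S$2$2 + S$3$2*S$3$2 = 1"
           "S$1$1*S$1$2 + S$2$1*S$2$2 + S$3$1*S$3$2 = 0"
    using o1 by (auto simp: vec_eq_iff forall_3 matrix_matrix_mult_def transpose_def sum_3 mat_def)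
  have "S$3$1*S$3$1 + S$3$2*S$3$2 + S$3$3*S$3$3 = 1"
    using o2 by (auto simp: vec_eq_iff forall_3 matrix_matrix_mult_def transpose_def sum_3 mat_def)
  then have r3: "S$3$1 = 0" "S$3$2 = 0"
    using c3 by (auto simp: add_nonneg_eq_0_iff)
  define g :: "real^2^2" where
    "g = (\<chi> i j. S $ (if i = 1 then 1 else 2) $ (if j = 1 then 1 else 2))"
  have g: "g$1$1 = S$1$1" "g$1$2 = S$1$2" "g$2$1 = S$2$1" "g$2$2 = S$2$2"
    by (simp_all add: g_def)
  have "transpose g ** g = mat 1"
    using e1 r3 by (simp add: vec_eq_iff forall_2 matrix_matrix_mult_def transpose_def sum_2
        mat_def g mult.commute)
  moreover have "det g = 1"
    using rS c3 r3 by (simp add: rotation_matrix_def det_2 det_3 g)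
  ultimately have "rotation_matrix g"
    by (simp add: rotation_matrix_def orthogonal_matrix)
  moreover have "transpose S *v vector [w$1, w$2, z] =
      vector [(transpose g *v w)$1, (transpose g *v w)$2, z]" for w z
    using c3 r3 by (simp add: vec_eq_iff forall_3 matrix_vector_mult_def transpose_def sum_3 sum_2 g)
  ultimately show ?thesis
    using that by blast
qed

lemma proj_eq_rot2_proj:
  assumes R: "rotation_matrix R" "R *v u = vector [0, 0, -1]"
    and R': "rotation_matrix R'" "R' *v u = vector [0, 0, -1]"
  obtains g where "rotation_matrix g" "proj R' \<rho> = rot2 g (proj R \<rho>)"
proof -
  define S where "S = R' ** transpose R"
  have oR: "orthogonal_matrix R" and oR': "orthogonal_matrix R'"
    using R R' by (auto simp: rotation_matrix_def)
  have "transpose R *v vector [0, 0, -1] = u"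
    using orthogonal_matrix_transpose_mult_vector[OF oR, of u] R(2) by simp
  then have "S *v vector [0, 0, -1] = vector [0, 0, -1]"
    using R'(2) by (simp add: S_def matrix_vector_mul_assoc[symmetric])
  moreover have "(vector [0, 0, 1] :: real^3) = - vector [0, 0, -1]"
    by (simp add: vec_eq_iff forall_3)
  ultimately have "S *v vector [0, 0, 1] = vector [0, 0, 1]"
    by (metis linear_neg[OF matrix_vector_mul_linear])
  moreover have "rotation_matrix S"
    using R(1) R'(1) by (simp add: S_def rotation_matrix_mul rotation_matrix_transpose)
  ultimately obtain g :: "real^2^2" where g: "rotation_matrix g"
    and gS: "\<And>w z. transpose S *v vector [w$1, w$2, z] =
                     vector [(transpose g *v w)$1, (transpose g *v w)$2, z]"
    using rotation_fixing_e3_acts_in_plane by blast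
  have "transpose R ** R = mat 1"
    using oR by (simp add: orthogonal_matrix)
  then have "transpose R *v (transpose S *v y) = transpose R' *v y" for y
    unfolding S_def matrix_transpose_mul transpose_transpose
    by (simp only: matrix_vector_mul_assoc matrix_mul_assoc matrix_mul_lid)
  then have "transpose R *v vector [(transpose g *v w)$1, (transpose g *v w)$2, z]
        = transpose R' *v vector [w$1, w$2, z]" for w z
    by (simp only: gS[symmetric])
  then have "proj R' \<rho> = rot2 g (proj R \<rho>)"
    by (simp add: fun_eq_iff proj_def rot2_def rot3_def)
  with g show ?thesis
    using that by blast
qed

section \<open>Comparing projections pointwise\<close>

lemma norm_le_norm_vector3:
  fixes w :: "real^2"
  shows "norm w \<le> norm (vector [w$1, w$2, z] :: real^3)"
    and "\<bar>z\<bar> \<le> norm (vector [w$1, w$2, z] :: real^3)"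
proof -
  have sq: "(norm (vector [w$1, w$2, z] :: real^3))^2 = (norm w)^2 + z^2"
    unfolding power2_norm_eq_inner by (simp add: inner_vec_def sum_2 sum_3 power2_eq_square)
  show "norm w \<le> norm (vector [w$1, w$2, z] :: real^3)"
    by (rule power2_le_imp_le) (simp_all only: sq le_add_same_cancel1 zero_le_power2 norm_ge_zero)
  show "\<bar>z\<bar> \<le> norm (vector [w$1, w$2, z] :: real^3)"
    using component_le_norm_cart[of "vector [w$1, w$2, z] :: real^3" 3] by simp
qed

lemma integrable_line_orthogonal_matrix:
  fixes f :: "real^3 \<Rightarrow> real" and w :: "real^2"
  assumes A: "orthogonal_matrix A" and cont: "continuous_on UNIV f"
    and supp: "\<And>x. norm x > 1 \<Longrightarrow> f x = 0"
  shows "integrable lborel (\<lambda>z. f (A *v vector [w$1, w$2, z]))"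
proof -
  have line: "(\<lambda>z. A *v vector [w$1, w$2, z]) = (\<lambda>z. A *v vector [w$1, w$2, 0] + z *\<^sub>R (A *v axis 3 1))"
  proof
    fix z
    have "(vector [w$1, w$2, z] :: real^3) = vector [w$1, w$2, 0] + z *\<^sub>R axis 3 1"
      by (simp add: vec_eq_iff forall_3 axis_def)
    then show "A *v vector [w$1, w$2, z] = A *v vector [w$1, w$2, 0] + z *\<^sub>R (A *v axis 3 1)"
      by (simp only: matrix_vector_right_distrib matrix_vector_mult_scaleR)
  qed
  have "continuous_on {-1..1} (\<lambda>z. A *v vector [w$1, w$2, z])"
    unfolding line by (intro continuous_intros)
  then have "continuous_on {-1..1} (\<lambda>z. f (A *v vector [w$1, w$2, z]))"
    by (rule continuous_on_compose2[OF cont]) simp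
  then have "integrable lborel (\<lambda>z. indicator {-1..1} z *\<^sub>R f (A *v vector [w$1, w$2, z]))"
    by (intro borel_integrable_compact) auto
  moreover have "(\<lambda>z. indicator {-1..1} z *\<^sub>R f (A *v vector [w$1, w$2, z])) =
      (\<lambda>z. f (A *v vector [w$1, w$2, z]))"
  proof
    fix z
    show "indicator {-1..1} z *\<^sub>R f (A *v vector [w$1, w$2, z]) = f (A *v vector [w$1, w$2, z])"
    proof (cases "\<bar>z\<bar> \<le> 1")
      case False
      then have "1 < norm (A *v vector [w$1, w$2, z])"
        using norm_le_norm_vector3(2)[where w=w and z=z] by (simp add: norm_orthogonal_matrix_vector[OF A])
      then show ?thesis
        using supp False by (simp add: abs_le_iff)
    qed (simp add: abs_le_iff)
  qed
  ultimately show ?thesis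
    by (simp only:)
qed

lemma proj_diff_le:
  fixes f :: "real^3 \<Rightarrow> real"
  assumes R: "orthogonal_matrix R" and R': "orthogonal_matrix R'"
    and lip: "B-lipschitz_on UNIV f" and supp: "\<And>x. norm x > 1 \<Longrightarrow> f x = 0"
    and close: "\<And>y. norm (transpose R' *v y - transpose R *v y) \<le> \<theta> * norm y"
  shows "\<bar>proj R f w - proj R' f w\<bar> \<le> 2 * B * \<theta> * indicator (cball 0 1) w"
proof -
  define y where "y z = (vector [w$1, w$2, z] :: real^3)" for z
  define c where "c = B * \<theta> * indicator (cball 0 1) w"
  have B0: "0 \<le> B"
    using lip by (rule lipschitz_on_nonneg)
  have "0 \<le> \<theta> * norm (axis 1 1 :: real^3)"
    using norm_ge_zero close by (rule order_trans)
  then have \<theta>0: "0 \<le> \<theta>"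
    by simp
  have ptwise: "\<bar>f (transpose R *v y z) - f (transpose R' *v y z)\<bar> \<le> c * indicator {-1..1} z" for z
  proof (cases "norm (y z) \<le> 1")
    case True
    then have "norm w \<le> 1" "\<bar>z\<bar> \<le> 1"
      using norm_le_norm_vector3[where w=w and z=z] unfolding y_def by linarith+
    have "\<bar>f (transpose R *v y z) - f (transpose R' *v y z)\<bar>
          \<le> B * norm (transpose R' *v y z - transpose R *v y z)"
      using lipschitz_on_normD[OF lip] by (simp add: norm_minus_commute)
    also have "\<dots> \<le> B * (\<theta> * norm (y z))"
      using close B0 by (rule mult_left_mono)
    also have "\<dots> \<le> B * \<theta>"
      using True \<theta>0 B0 by (intro mult_left_mono mult_left_le)
    finally show ?thesis
      using \<open>norm w \<le> 1\<close> \<open>\<bar>z\<bar> \<le> 1\<close> by (simp add: c_def abs_le_iff)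
  next
    case False
    have "1 < norm (transpose A *v y z)" if "orthogonal_matrix A" for A
      using False norm_orthogonal_matrix_vector[of "transpose A" "y z"] that by simp
    then have "f (transpose R *v y z) = 0" "f (transpose R' *v y z) = 0"
      using supp R R' by blast+
    moreover have "0 \<le> c"
      using B0 \<theta>0 by (simp add: c_def)
    ultimately show ?thesis
      by simp
  qed
  have cont: "continuous_on UNIV f"
    using lip by (rule lipschitz_on_continuous_on)
  have int: "integrable lborel (\<lambda>z. f (transpose R *v y z))"
    "integrable lborel (\<lambda>z. f (transpose R' *v y z))"
    unfolding y_def using R R' by (intro integrable_line_orthogonal_matrix[OF _ cont supp]; simp)+
  have "proj R f w - proj R' f w = (LINT z|lborel. f (transpose R *v y z) - f (transpose R' *v y z))"
    using int by (simp add: proj_def rot3_def y_def)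
  also have "\<bar>\<dots>\<bar> \<le> (LINT z|lborel. c * indicator {-1..1::real} z)"
    using Bochner_Integration.integrable_diff[OF int] _ ptwise
    by (rule integral_abs_bound_integral) (intro integrable_mult_right integrable_real_indicator; simp)
  also have "\<dots> = 2 * B * \<theta> * indicator (cball 0 1) w"
    by (simp add: measure_def c_def)
  finally show ?thesis .
qed

lemma L2norm2_le_of_bounded_on_disc:
  assumes bound: "\<And>w. \<bar>h w\<bar> \<le> c * indicator (cball 0 1) w"
  shows "L2norm2 h \<le> sqrt pi * c"
proof -
  have c0: "0 \<le> c"
    using bound[of 0] by simp
  have "(h w)^2 \<le> c^2 * indicator (cball 0 1) w" for w
  proof (cases "w \<in> cball 0 1")
    case True
    then have "\<bar>h w\<bar> \<le> c"
      using bound[of w] by simp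
    from power_mono[OF this abs_ge_zero, of 2] show ?thesis
      using True by simp
  qed (use bound[of w] in simp)
  moreover have "integrable lborel (\<lambda>w::real^2. c^2 * indicator (cball 0 1) w)"
    by (intro integrable_mult_right integrable_real_indicator) (use emeasure_bounded_finite[OF bounded_cball] in auto)
  ultimately have "(LINT w|lborel. (h w)^2) \<le> (LINT w|lborel. c^2 * indicator (cball (0::real^2) 1) w)"
    by (intro integral_mono') auto
  also have "\<dots> = c^2 * pi"
    using circle_area[of 1 "0::real^2"] content_cball_conv_ball[of "0::real^2" 1] by simp
  finally show ?thesis
    using c0 by (simp add: L2norm2_def real_le_lsqrt real_sqrt_mult power_mult_distrib mult.commute)
qed

lemma L2R_le_L2norm2:
  assumes "rotation_matrix g"
  shows "L2R I1 I2 \<le> L2norm2 (\<lambda>w. I1 w - rot2 g I2 w)"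
  unfolding L2R_def
proof (rule cINF_lower)
  show "bdd_below ((\<lambda>g. L2norm2 (\<lambda>w. I1 w - rot2 g I2 w)) ` {g. rotation_matrix g})"
    by (rule bdd_belowI[of _ 0]) (auto simp: L2norm2_def intro!: integral_nonneg_AE)
qed (use assms in simp)

theorem proposition2:
  fixes \<rho> :: "real^3 \<Rightarrow> real" and u v :: "real^3" and I1 I2 :: "real^2 \<Rightarrow> real"
  assumes diff: "\<And>x. \<rho> differentiable (at x)"
    and nonneg: "\<And>x. \<rho> x \<ge> 0"
    and integrable: "integrable lborel \<rho>"
    and prob: "(LINT x|lborel. \<rho> x) = 1"
    and supp: "\<And>x. norm x > 1 \<Longrightarrow> \<rho> x = 0"
    and bdd: "bdd_above (range (\<lambda>x. norm (grad \<rho> x)))"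
    and u: "norm u = 1" and v: "norm v = 1"
    and I1: "is_tomo_proj \<rho> u I1" and I2: "is_tomo_proj \<rho> v I2"
  shows "L2R I1 I2 \<le> 2 * sqrt pi * (SUP x. norm (grad \<rho> x)) * vangle u v"
proof -
  let ?B = "SUP x. norm (grad \<rho> x)"
  obtain R1 where R1: "rotation_matrix R1" "R1 *v u = vector [0, 0, -1]" "I1 = proj R1 \<rho>"
    using I1 unfolding is_tomo_proj_def by blast
  obtain R2 where R2: "rotation_matrix R2" "R2 *v v = vector [0, 0, -1]" "I2 = proj R2 \<rho>"
    using I2 unfolding is_tomo_proj_def by blast
  obtain Q where Q: "rotation_matrix Q" "Q *v u = v"
    and close: "\<And>x. norm (Q *v x - x) \<le> vangle u v * norm x"
    using exists_rotation_displacement_le_vangle[OF u v] by blast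
  have "(R1 ** transpose Q) *v v = vector [0, 0, -1]"
    using Q R1(2) orthogonal_matrix_transpose_mult_vector[of Q u]
    by (simp add: rotation_matrix_def matrix_vector_mul_assoc[symmetric])
  then obtain g where g: "rotation_matrix g" "proj (R1 ** transpose Q) \<rho> = rot2 g I2"
    using proj_eq_rot2_proj[OF R2(1,2)] R1(1) Q(1) R2(3)
    by (metis rotation_matrix_mul rotation_matrix_transpose)
  have "\<bar>I1 w - rot2 g I2 w\<bar> \<le> 2 * ?B * vangle u v * indicator (cball 0 1) w" for w
    unfolding R1(3) g(2)[symmetric]
  proof (rule proj_diff_le[OF _ _ lipschitz_on_SUP_norm_grad[OF diff bdd] supp])
    show "norm (transpose (R1 ** transpose Q) *v y - transpose R1 *v y) \<le> vangle u v * norm y" for y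
      using close[of "transpose R1 *v y"] R1(1) norm_orthogonal_matrix_vector[of "transpose R1" y]
      by (simp add: matrix_transpose_mul matrix_vector_mul_assoc[symmetric] rotation_matrix_def)
  qed (use R1(1) Q(1) in \<open>auto simp: rotation_matrix_def intro: orthogonal_matrix_mul\<close>)
  then have "L2norm2 (\<lambda>w. I1 w - rot2 g I2 w) \<le> 2 * sqrt pi * ?B * vangle u v"
    using L2norm2_le_of_bounded_on_disc[of _ "2 * ?B * vangle u v"] by (simp add: mult_ac)
  then show ?thesis
    using L2R_le_L2norm2[OF g(1), of I1 I2] by linarith
qed

end
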